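(* Let $a$ and $m$ be coprime positive integers. Then for all complex $s$ with ${\rm Re}(s)>1$, \[ m^s\,\Phi(s,a/m)=\sum_{d\mid m}\frac{d^s}{\varphi(d)}\sum_{\chi\in\hat{U}_d} \chi(a)\,\tau(\overline{\chi})\,L(s,\chi). \]
   Context: For real $\beta$ and ${\rm Re}(s)>1$, $\Phi(s,\beta)=\sum_{n=1}^\infty e^{2\pi i\beta n}n^{-s}$ (periodic zeta function). For a positive integer $d$, $\hat U_d$ is the group of Dirichlet characters of modulus $d$ (not necessarily primitive), $L(s,\chi)=\sum_{n\ge1}\chi(n)n^{-s}$, and $\tau(\chi)=\sum_{\nu\bmod d}\chi(\nu)e^{2\pi i\nu/d}$ is the Gauss sum computed with respect to the modulus $d$; $\overline\chi$ is the complex conjugate character; $\varphi$ is Euler's totient function. *)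

theory Defs
  imports "HOL-Analysis.Analysis" "HOL-Number_Theory.Number_Theory"
begin

definition periodic_zeta :: "complex \<Rightarrow> real \<Rightarrow> complex" where
  "periodic_zeta s \<beta> =
     (\<Sum>n. exp (2 * of_real pi * \<i> * of_real \<beta> * of_nat (Suc n)) / of_nat (Suc n) powr s)"

definition dirichlet_char :: "nat \<Rightarrow> (nat \<Rightarrow> complex) \<Rightarrow> bool" where
  "dirichlet_char d chi \<longleftrightarrow>
     (\<forall>n. chi (n + d) = chi n) \<and>
     (\<forall>m n. chi (m * n) = chi m * chi n) \<and>
     (\<forall>n. chi n \<noteq> 0 \<longleftrightarrow> coprime n d)"

definition dchars :: "nat \<Rightarrow> (nat \<Rightarrow> complex) set" where
  "dchars d = {chi. dirichlet_char d chi}"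

definition dirichlet_L :: "complex \<Rightarrow> (nat \<Rightarrow> complex) \<Rightarrow> complex" where
  "dirichlet_L s chi = (\<Sum>n. chi (Suc n) / of_nat (Suc n) powr s)"

definition gauss_sum :: "nat \<Rightarrow> (nat \<Rightarrow> complex) \<Rightarrow> complex" where
  "gauss_sum d chi = (\<Sum>\<nu><d. chi \<nu> * exp (2 * of_real pi * \<i> * of_nat \<nu> / of_nat d))"

end

theory Submission
  imports Defs
begin

text \<open>Sort the terms \<open>n\<close> of the periodic zeta function by \<open>d = m div gcd n m\<close>: writing
  \<open>n = (m div d) * k\<close> with \<open>k\<close> coprime to \<open>d\<close>, the terms belonging to \<open>d\<close> add up to
  \<open>d powr s\<close> times the series of \<open>e(a k / d) / k powr s\<close> over the \<open>k\<close> coprime to \<open>d\<close>, where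
  \<open>e(k / d) = unity_root d k\<close>. On the units modulo \<open>d\<close>, the additive character
  \<open>k \<mapsto> e(a k / d)\<close> expands in Dirichlet characters with Gauss sums as coefficients,
  \<open>\<phi>(d) e(a k / d) = (\<Sum>\<chi>. \<chi>(a) \<tau>(cnj \<chi>) \<chi>(k))\<close>, by the orthogonality relations. These need
  enough characters of the finite abelian group of units, which are obtained by extending
  characters from subgroups one element at a time.\<close>

lemma ex_complex_nth_root:
  assumes "n > 0"
  shows "\<exists>w::complex. w ^ n = c"
proof (cases "c = 0")
  case False
  then have "card {w. w ^ n = c} > 0" using assms by (simp add: card_nth_roots)
  then show ?thesis by (auto simp: card_gt_0_iff)
qed (use assms in auto)

lemma (in group) subgroup_nat_pow_closed:
  assumes "subgroup H G" "h \<in> H"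
  shows "h [^] (n::nat) \<in> H"
  using assms by (induction n) (auto intro: subgroup.m_closed subgroup.one_closed)

context comm_group
begin

lemma nat_pow_mult_mult:
  assumes "h1 \<in> carrier G" "h2 \<in> carrier G" "g \<in> carrier G"
  shows "(h1 \<otimes> g [^] j1) \<otimes> (h2 \<otimes> g [^] j2) = (h1 \<otimes> h2) \<otimes> g [^] (j1 + j2 :: nat)"
  using assms by (simp add: nat_pow_mult m_ac)

lemma least_pow_in_subgroup:
  assumes fin: "finite (carrier G)" and H: "subgroup H G" and g: "g \<in> carrier G"
  obtains r where "r > 0" "\<And>j::nat. g [^] j \<in> H \<longleftrightarrow> r dvd j"
proof -
  interpret H: subgroup H G by (rule H)
  define r :: nat where "r = (LEAST j. 0 < j \<and> g [^] j \<in> H)"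
  have "0 < ord g \<and> g [^] ord g \<in> H"
    using ord_ge_1[OF fin g] g by simp
  then have r: "0 < r \<and> g [^] r \<in> H"
    unfolding r_def by (rule LeastI[where P = "\<lambda>j. 0 < j \<and> g [^] j \<in> H"])
  have "g [^] j \<in> H \<longleftrightarrow> r dvd j" for j :: nat
  proof
    assume j: "g [^] j \<in> H"
    have "g [^] (r * (j div r)) \<in> H"
      using subgroup_nat_pow_closed[OF H, of "g [^] r" "j div r"] r g by (simp add: nat_pow_pow)
    moreover have "g [^] j = g [^] (r * (j div r)) \<otimes> g [^] (j mod r)"
      using g by (simp add: nat_pow_mult)
    ultimately have "g [^] (j mod r) \<in> H"
      using j g by (metis H.mem_carrier H.m_closed H.m_inv_closed inv_solve_left nat_pow_closed)
    then have "j mod r = 0"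
      using not_less_Least[of "j mod r" "\<lambda>j. 0 < j \<and> g [^] j \<in> H"] r
      unfolding r_def by auto
    then show "r dvd j" by auto
  next
    assume "r dvd j"
    then show "g [^] j \<in> H"
      using subgroup_nat_pow_closed[OF H, of "g [^] r"] r g by (auto simp: nat_pow_pow elim!: dvdE)
  qed
  then show ?thesis using r that by blast
qed

lemma subgroup_adjoin:
  fixes r :: nat
  assumes H: "subgroup H G" and g: "g \<in> carrier G" and r: "r > 0" "g [^] r \<in> H"
  shows "subgroup {h \<otimes> g [^] j | h (j::nat). h \<in> H} G" (is "subgroup ?H' G")
proof
  interpret H: subgroup H G by (rule H)
  show "?H' \<subseteq> carrier G" using g by auto
  show "\<one> \<in> ?H'" by (intro CollectI exI[of _ \<one>] exI[of _ 0]) auto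
  show "x \<otimes> y \<in> ?H'" if "x \<in> ?H'" "y \<in> ?H'" for x y
  proof -
    obtain h1 and j1 :: nat where x: "x = h1 \<otimes> g [^] j1" "h1 \<in> H" using \<open>x \<in> ?H'\<close> by blast
    obtain h2 and j2 :: nat where y: "y = h2 \<otimes> g [^] j2" "h2 \<in> H" using \<open>y \<in> ?H'\<close> by blast
    have "h1 \<otimes> h2 \<in> H" using x(2) y(2) by simp
    then show ?thesis
      unfolding x(1) y(1) nat_pow_mult_mult[OF H.mem_carrier[OF x(2)] H.mem_carrier[OF y(2)] g]
      by blast
  qed
  show "inv x \<in> ?H'" if "x \<in> ?H'" for x
  proof -
    obtain h and j :: nat where x: "x = h \<otimes> g [^] j" "h \<in> H" using \<open>x \<in> ?H'\<close> by blast
    have "g [^] ((r - 1) * j) \<otimes> g [^] j = g [^] (r * j)"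
      using g r(1) by (simp add: nat_pow_mult algebra_simps)
    then have "(inv (g [^] (r * j)) \<otimes> g [^] ((r - 1) * j)) \<otimes> g [^] j = \<one>"
      using g by (simp add: m_assoc)
    then have "inv (g [^] j) = inv (g [^] (r * j)) \<otimes> g [^] ((r - 1) * j)"
      using g by (intro inv_equality) auto
    then have "inv x = (inv h \<otimes> inv (g [^] (r * j))) \<otimes> g [^] ((r - 1) * j)"
      using x g by (simp add: inv_mult m_assoc)
    moreover have "g [^] (r * j) \<in> H"
      using subgroup_nat_pow_closed[OF H r(2), of j] g by (simp add: nat_pow_pow)
    then have "inv h \<otimes> inv (g [^] (r * j)) \<in> H" using x(2) by simp
    ultimately show ?thesis by blast
  qed
qed

lemma character_adjoin_well_defined:
  fixes \<psi> :: "'a \<Rightarrow> complex"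
  assumes H: "subgroup H G" and g: "g \<in> carrier G" and r: "\<And>j::nat. g [^] j \<in> H \<longleftrightarrow> r dvd j"
    and \<psi>_one: "\<psi> \<one> = 1" and \<psi>_mult: "\<And>x y. x \<in> H \<Longrightarrow> y \<in> H \<Longrightarrow> \<psi> (x \<otimes> y) = \<psi> x * \<psi> y"
    and w: "w ^ r = \<psi> (g [^] r)"
    and h: "h1 \<in> H" "h2 \<in> H" and eq: "h1 \<otimes> g [^] j1 = h2 \<otimes> g [^] (j2::nat)"
  shows "\<psi> h1 * w ^ j1 = \<psi> h2 * w ^ j2"
proof -
  interpret H: subgroup H G by (rule H)
  have \<psi>_pow: "\<psi> (x [^] (n::nat)) = \<psi> x ^ n" if "x \<in> H" for x n
    using that by (induction n) (auto simp: \<psi>_one \<psi>_mult subgroup_nat_pow_closed[OF H])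
  have le: "\<psi> h1 * w ^ j1 = \<psi> h2 * w ^ j2"
    if h: "h1 \<in> H" "h2 \<in> H" and eq: "h1 \<otimes> g [^] j1 = h2 \<otimes> g [^] j2" and "j1 \<le> j2"
    for h1 h2 and j1 j2 :: nat
  proof -
    have "h1 \<otimes> g [^] j1 = (h2 \<otimes> g [^] (j2 - j1)) \<otimes> g [^] j1"
      using eq h g \<open>j1 \<le> j2\<close> by (simp add: m_assoc nat_pow_mult)
    then have h1: "h1 = h2 \<otimes> g [^] (j2 - j1)"
      using h g by (metis H.mem_carrier m_closed nat_pow_closed right_cancel)
    then have "g [^] (j2 - j1) = inv h2 \<otimes> h1"
      using h g by (simp add: inv_solve_left)
    then have "g [^] (j2 - j1) \<in> H" using h by simp
    then obtain q where q: "j2 - j1 = r * q" using r by (auto elim: dvdE)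
    have "\<psi> (g [^] (j2 - j1)) = w ^ (j2 - j1)"
      using \<psi>_pow[of "g [^] r" q] r[of r] g by (simp add: q nat_pow_pow w power_mult)
    then have "\<psi> h1 = \<psi> h2 * w ^ (j2 - j1)"
      using h1 h \<psi>_mult \<open>g [^] (j2 - j1) \<in> H\<close> by simp
    then show ?thesis using \<open>j1 \<le> j2\<close> by (simp flip: power_add)
  qed
  show ?thesis
    using le[OF h eq] le[OF h(2,1) eq[symmetric]] by (cases "j1 \<le> j2") auto
qed

lemma character_extend_step:
  fixes \<psi> :: "'a \<Rightarrow> complex"
  assumes H: "subgroup H G" and g: "g \<in> carrier G"
    and r: "r > 0" "\<And>j::nat. g [^] j \<in> H \<longleftrightarrow> r dvd j"
    and \<psi>_one: "\<psi> \<one> = 1" and \<psi>_mult: "\<And>x y. x \<in> H \<Longrightarrow> y \<in> H \<Longrightarrow> \<psi> (x \<otimes> y) = \<psi> x * \<psi> y"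
    and w: "w ^ r = \<psi> (g [^] r)"
  obtains H' chi where "subgroup H' G" "insert g H \<subseteq> H'"
    "\<And>x y. x \<in> H' \<Longrightarrow> y \<in> H' \<Longrightarrow> chi (x \<otimes> y) = chi x * chi y"
    "\<And>x. x \<in> H \<Longrightarrow> chi x = \<psi> x" "chi g = w"
proof -
  interpret H: subgroup H G by (rule H)
  define H' where "H' = {h \<otimes> g [^] j | h (j::nat). h \<in> H}"
  define chi where "chi y = (THE v. \<exists>h\<in>H. \<exists>j::nat. y = h \<otimes> g [^] j \<and> v = \<psi> h * w ^ j)" for y
  have chi: "chi (h \<otimes> g [^] j) = \<psi> h * w ^ j" if "h \<in> H" for h j
    unfolding chi_def
  proof (rule the_equality)
    fix v assume "\<exists>h'\<in>H. \<exists>j'::nat. h \<otimes> g [^] j = h' \<otimes> g [^] j' \<and> v = \<psi> h' * w ^ j'"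
    then show "v = \<psi> h * w ^ j"
      using character_adjoin_well_defined[OF H g r(2) \<psi>_one \<psi>_mult w that] by metis
  qed (use that in blast)
  have H': "subgroup H' G"
    unfolding H'_def by (rule subgroup_adjoin[OF H g r(1)]) (simp add: r(2))
  have "g \<in> H'"
    unfolding H'_def using g by (intro CollectI exI[of _ \<one>] exI[of _ "1::nat"]) simp
  moreover have "h \<in> H'" if "h \<in> H" for h
    unfolding H'_def using that by (intro CollectI exI[of _ h] exI[of _ "0::nat"]) simp
  ultimately have g_H: "insert g H \<subseteq> H'" by blast
  have chi_mult: "chi (x \<otimes> y) = chi x * chi y" if "x \<in> H'" "y \<in> H'" for x y
  proof -
    obtain h1 and j1 :: nat where x: "x = h1 \<otimes> g [^] j1" "h1 \<in> H" using \<open>x \<in> H'\<close> unfolding H'_def by blast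
    obtain h2 and j2 :: nat where y: "y = h2 \<otimes> g [^] j2" "h2 \<in> H" using \<open>y \<in> H'\<close> unfolding H'_def by blast
    have "x \<otimes> y = (h1 \<otimes> h2) \<otimes> g [^] (j1 + j2)"
      unfolding x(1) y(1) by (rule nat_pow_mult_mult[OF H.mem_carrier[OF x(2)] H.mem_carrier[OF y(2)] g])
    then have "chi (x \<otimes> y) = \<psi> (h1 \<otimes> h2) * w ^ (j1 + j2)"
      using chi x(2) y(2) by simp
    then show ?thesis using chi x y \<psi>_mult by (simp add: power_add)
  qed
  have chi_ext: "chi x = \<psi> x" if "x \<in> H" for x
    using chi[OF that, of 0] that by simp
  have "chi g = w"
    using chi[of \<one> 1] \<psi>_one g by simp
  with H' g_H chi_mult chi_ext show ?thesis by (rule that)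
qed

lemma character_extend:
  fixes \<psi> :: "'a \<Rightarrow> complex"
  assumes fin: "finite (carrier G)" and "subgroup H G" and "\<psi> \<one> = 1"
    and "\<And>x y. x \<in> H \<Longrightarrow> y \<in> H \<Longrightarrow> \<psi> (x \<otimes> y) = \<psi> x * \<psi> y"
  obtains chi where "\<And>x y. x \<in> carrier G \<Longrightarrow> y \<in> carrier G \<Longrightarrow> chi (x \<otimes> y) = chi x * chi y"
    "\<And>x. x \<in> H \<Longrightarrow> chi x = \<psi> x"
proof -
  have "\<exists>chi. (\<forall>x\<in>carrier G. \<forall>y\<in>carrier G. chi (x \<otimes> y) = chi x * chi y) \<and> (\<forall>x\<in>H. chi x = \<psi> x)"
    using assms(2-4)
  proof (induction "card (carrier G) - card H" arbitrary: H \<psi> rule: less_induct)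
    case less
    interpret H: subgroup H G by (rule less.prems(1))
    show ?case
    proof (cases "H = carrier G")
      case True
      then show ?thesis using less.prems by blast
    next
      case False
      then obtain g where g: "g \<in> carrier G" "g \<notin> H" using H.subset by blast
      obtain r where r: "r > 0" "\<And>j::nat. g [^] j \<in> H \<longleftrightarrow> r dvd j"
        using least_pow_in_subgroup[OF fin less.prems(1) g(1)] by blast
      obtain w where "w ^ r = \<psi> (g [^] r)" using ex_complex_nth_root[OF r(1)] ..
      with character_extend_step[OF less.prems(1) g(1) r less.prems(2,3)]
      obtain H' chi where H': "subgroup H' G" "insert g H \<subseteq> H'"
        and chi_mult: "\<And>x y. x \<in> H' \<Longrightarrow> y \<in> H' \<Longrightarrow> chi (x \<otimes> y) = chi x * chi y"
        and chi_ext: "\<And>x. x \<in> H \<Longrightarrow> chi x = \<psi> x" by metis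
      have "card H < card H'"
        using H' g(2) subgroup.subset[OF H'(1)]
        by (intro psubset_card_mono) (auto intro: finite_subset[OF _ fin])
      moreover have "card H' \<le> card (carrier G)"
        using subgroup.subset[OF H'(1)] by (intro card_mono fin)
      ultimately have "card (carrier G) - card H' < card (carrier G) - card H" by linarith
      moreover have "chi \<one> = 1" using chi_ext[of \<one>] less.prems(2) by simp
      ultimately obtain chi' where "\<forall>x\<in>carrier G. \<forall>y\<in>carrier G. chi' (x \<otimes> y) = chi' x * chi' y"
        "\<forall>x\<in>H'. chi' x = chi x"
        using less.hyps[OF _ H'(1)] chi_mult by blast
      then show ?thesis using H'(2) chi_ext by (intro exI[of _ chi']) auto
    qed
  qed
  then show ?thesis using that by blast
qed

lemma character_separates:
  assumes fin: "finite (carrier G)" and x: "x \<in> carrier G" "x \<noteq> \<one>"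
  obtains chi :: "'a \<Rightarrow> complex" where
    "\<And>y z. y \<in> carrier G \<Longrightarrow> z \<in> carrier G \<Longrightarrow> chi (y \<otimes> z) = chi y * chi z"
    "chi \<one> = 1" "chi x \<noteq> 1"
proof -
  obtain r where r: "r > 0" "\<And>j::nat. x [^] j \<in> {\<one>} \<longleftrightarrow> r dvd j"
    using least_pow_in_subgroup[OF fin triv_subgroup x(1)] by blast
  have "r \<noteq> 1" using r(2)[of 1] x by auto
  then have "card {w::complex. w ^ r = 1} \<noteq> card {1::complex}"
    using r(1) by (simp add: card_roots_unity_eq)
  then have "{w::complex. w ^ r = 1} \<noteq> {1}" by metis
  then obtain w :: complex where w: "w ^ r = 1" "w \<noteq> 1" by auto
  obtain H' chi where H': "subgroup H' G" "insert x {\<one>} \<subseteq> H'"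
    and chi_mult: "\<And>y z. y \<in> H' \<Longrightarrow> z \<in> H' \<Longrightarrow> chi (y \<otimes> z) = chi y * chi z"
    and chi_one: "\<And>y. y \<in> {\<one>} \<Longrightarrow> chi y = 1" and chi_x: "chi x = w"
    using character_extend_step[where \<psi> = "\<lambda>_. 1", OF triv_subgroup x(1) r refl mult_1[symmetric] w(1)]
    by blast
  obtain chi' where chi'_mult: "\<And>y z. y \<in> carrier G \<Longrightarrow> z \<in> carrier G \<Longrightarrow> chi' (y \<otimes> z) = chi' y * chi' z"
    and chi'_ext: "\<And>y. y \<in> H' \<Longrightarrow> chi' y = chi y"
    using character_extend[OF fin H'(1) chi_one[OF singletonI] chi_mult] by blast
  show ?thesis
  proof (rule that)
    show "chi' (y \<otimes> z) = chi' y * chi' z" if "y \<in> carrier G" "z \<in> carrier G" for y z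
      using that by (rule chi'_mult)
    show "chi' \<one> = 1" using chi'_ext[of \<one>] chi_one[of \<one>] H'(2) by simp
    show "chi' x \<noteq> 1" using chi'_ext[of x] H'(2) chi_x w(2) by simp
  qed
qed

end

lemma coprime_add_self_left: "coprime (n + d) d \<longleftrightarrow> coprime (n::nat) d"
  by (simp only: coprime_iff_gcd_eq_1 gcd_add1)

lemma dirichlet_char_mult:
  "dirichlet_char d chi \<Longrightarrow> chi (m * n) = chi m * chi n"
  by (simp add: dirichlet_char_def)

lemma dirichlet_char_eq_0_iff:
  "dirichlet_char d chi \<Longrightarrow> chi n = 0 \<longleftrightarrow> \<not> coprime n d"
  by (auto simp: dirichlet_char_def)

lemma dirichlet_char_mod:
  assumes "dirichlet_char d chi"
  shows "chi (n mod d) = chi n"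
proof -
  have "chi (r + k * d) = chi r" for r k
  proof (induction k)
    case (Suc k)
    have "chi (r + Suc k * d) = chi ((r + k * d) + d)" by (rule arg_cong[of _ _ chi]) simp
    also have "\<dots> = chi (r + k * d)" using assms by (simp add: dirichlet_char_def)
    finally show ?case using Suc by simp
  qed simp
  from this[of "n mod d" "n div d"] show ?thesis by simp
qed

lemma dirichlet_char_cong:
  "dirichlet_char d chi \<Longrightarrow> [a = b] (mod d) \<Longrightarrow> chi a = chi b"
  unfolding cong_def by (metis dirichlet_char_mod)

lemma dirichlet_char_one:
  assumes "dirichlet_char d chi"
  shows "chi 1 = 1"
proof -
  have "chi 1 * chi 1 = chi 1 * 1" using dirichlet_char_mult[OF assms, of 1 1] by simp
  moreover have "chi 1 \<noteq> 0" using dirichlet_char_eq_0_iff[OF assms, of 1] by simp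
  ultimately show ?thesis by (metis mult_left_cancel)
qed

lemma dirichlet_char_power:
  assumes "dirichlet_char d chi"
  shows "chi (n ^ k) = chi n ^ k"
  using dirichlet_char_one[OF assms]
  by (induction k) (simp_all add: dirichlet_char_mult[OF assms])

lemma dirichlet_char_power_totient:
  assumes "dirichlet_char d chi" "coprime n d"
  shows "chi n ^ totient d = 1"
  using dirichlet_char_cong[OF assms(1) euler_theorem[OF assms(2)]]
  using dirichlet_char_one[OF assms(1)] by (simp add: dirichlet_char_power[OF assms(1)])

lemma norm_dirichlet_char:
  assumes "dirichlet_char d chi" "coprime n d" "d > 0"
  shows "norm (chi n) = 1"
  using power_eq_1_iff[OF dirichlet_char_power_totient[OF assms(1,2)]] assms(3) by simp

lemma norm_dirichlet_char_le:
  assumes "dirichlet_char d chi" "d > 0"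
  shows "norm (chi n) \<le> 1"
  using norm_dirichlet_char[OF assms(1) _ assms(2), of n] dirichlet_char_eq_0_iff[OF assms(1), of n]
  by (cases "coprime n d") auto

lemma dirichlet_char_mult_cnj:
  assumes "dirichlet_char d chi" "coprime n d" "d > 0"
  shows "chi n * cnj (chi n) = 1"
  using norm_dirichlet_char[OF assms] by (simp add: complex_mult_cnj cmod_def)

lemma dirichlet_char_cnj_eq:
  assumes chi: "dirichlet_char d chi" and d: "d > 0" and inv: "[n * n' = 1] (mod d)"
  shows "cnj (chi n) = chi n'"
proof -
  have "coprime n d" using cong_imp_coprime[OF cong_sym[OF inv]] by simp
  have "cnj (chi n) = cnj (chi n) * (chi n * chi n')"
    using dirichlet_char_cong[OF chi inv] dirichlet_char_one[OF chi]
    by (simp add: dirichlet_char_mult[OF chi])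
  also have "\<dots> = chi n'"
    using dirichlet_char_mult_cnj[OF chi \<open>coprime n d\<close> d] by (simp add: mult_ac)
  finally show ?thesis .
qed

lemma finite_dchars:
  assumes "d > 0"
  shows "finite (dchars d)"
proof -
  define S where "S = insert 0 {z::complex. z ^ totient d = 1}"
  have "finite S" unfolding S_def using assms by (simp add: finite_roots_unity Suc_le_eq)
  have "dchars d \<subseteq> (\<lambda>f n. f (n mod d)) ` (PiE {..<d} (\<lambda>_. S))"
  proof
    fix chi assume "chi \<in> dchars d"
    then have chi: "dirichlet_char d chi" by (simp add: dchars_def)
    have "chi n \<in> S" for n
      using dirichlet_char_power_totient[OF chi] dirichlet_char_eq_0_iff[OF chi] by (auto simp: S_def)
    then have "restrict chi {..<d} \<in> PiE {..<d} (\<lambda>_. S)" by simp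
    moreover have "chi = (\<lambda>n. restrict chi {..<d} (n mod d))"
      using assms by (simp add: dirichlet_char_mod[OF chi])
    ultimately show "chi \<in> (\<lambda>f n. f (n mod d)) ` (PiE {..<d} (\<lambda>_. S))" by blast
  qed
  then show ?thesis
    by (rule finite_subset) (intro finite_imageI finite_PiE \<open>finite S\<close> finite_lessThan)
qed

lemma coprime_imp_mod_pos: "coprime n d \<Longrightarrow> d > 1 \<Longrightarrow> n mod d > (0::nat)"
  using coprime_mod_left_iff[of d n] by (intro Nat.gr0I) simp

lemma dirichlet_char_lift:
  fixes psi :: "int \<Rightarrow> complex" and d :: nat
  defines "U \<equiv> {a. 0 < a \<and> a < int d \<and> coprime a (int d)}"
  assumes d: "d > 1"
    and psi_mult: "\<And>a b. a \<in> U \<Longrightarrow> b \<in> U \<Longrightarrow> psi (a * b mod int d) = psi a * psi b"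
    and psi_nonzero: "\<And>a. a \<in> U \<Longrightarrow> psi a \<noteq> 0"
  shows "dirichlet_char d (\<lambda>n. if coprime n d then psi (int (n mod d)) else 0)"
proof -
  have in_U: "int (n mod d) \<in> U" if "coprime n d" for n
    unfolding U_def using that d coprime_imp_mod_pos[OF that] by simp
  have "int (m mod d) * int (n mod d) mod int d = int (m * n mod d)" for m n
    by (simp flip: of_nat_mult of_nat_mod add: mod_mult_eq)
  then show ?thesis
    unfolding dirichlet_char_def using psi_mult[OF in_U in_U] psi_nonzero[OF in_U]
    by (auto simp: coprime_add_self_left)
qed

lemma dirichlet_char_separates:
  assumes x: "coprime x d" "\<not> [x = 1] (mod d)"
  obtains chi where "dirichlet_char d chi" "chi x \<noteq> 1"
proof -
  have "d \<noteq> 0"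
  proof
    assume "d = 0"
    then have "x = 1" using x(1) by simp
    then show False using x(2) by simp
  qed
  moreover have "d \<noteq> 1" using x(2) by (auto simp: cong_def)
  ultimately have d: "d > 1" by simp
  define R where "R = residue_ring (int d)"
  interpret residues "int d" R
    by unfold_locales (use d in \<open>simp_all add: R_def\<close>)
  define G where "G = units_of R"
  interpret G: comm_group G unfolding G_def by (rule units_comm_group)
  have carrier_G: "carrier G = {a. 0 < a \<and> a < int d \<and> coprime a (int d)}"
    unfolding G_def units_of_carrier by (rule res_units_eq)
  have mult_G: "a \<otimes>\<^bsub>G\<^esub> b = a * b mod int d" for a b
    unfolding G_def units_of_mult by (rule res_mult_eq)
  have "finite (carrier G)" unfolding carrier_G by (rule finite_subset[of _ "{0..<int d}"]) auto
  moreover have "int (x mod d) \<in> carrier G"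
    using x(1) d coprime_imp_mod_pos[OF x(1) d] unfolding carrier_G by simp
  moreover have "int (x mod d) \<noteq> \<one>\<^bsub>G\<^esub>"
    using x(2) d unfolding G_def units_of_one res_one_eq by (simp add: cong_def)
  ultimately obtain psi :: "int \<Rightarrow> complex" where psi_mult:
      "\<And>a b. a \<in> carrier G \<Longrightarrow> b \<in> carrier G \<Longrightarrow> psi (a \<otimes>\<^bsub>G\<^esub> b) = psi a * psi b"
    and psi_one: "psi \<one>\<^bsub>G\<^esub> = 1" and psi_x: "psi (int (x mod d)) \<noteq> 1"
    by (metis G.character_separates)
  have "psi a \<noteq> 0" if "a \<in> carrier G" for a
    using psi_mult[of a "inv\<^bsub>G\<^esub> a"] psi_one that by auto
  then have "dirichlet_char d (\<lambda>n. if coprime n d then psi (int (n mod d)) else 0)"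
    using psi_mult by (intro dirichlet_char_lift d) (simp_all add: carrier_G mult_G)
  then show ?thesis using x psi_x that by auto
qed

definition principal_dchar :: "nat \<Rightarrow> nat \<Rightarrow> complex" where
  "principal_dchar d n = (if coprime n d then 1 else 0)"

lemma principal_dchar_in_dchars: "principal_dchar d \<in> dchars d"
  unfolding dchars_def dirichlet_char_def principal_dchar_def
  by (auto simp: coprime_add_self_left)

lemma mult_in_dchars: "chi \<in> dchars d \<Longrightarrow> psi \<in> dchars d \<Longrightarrow> (\<lambda>n. chi n * psi n) \<in> dchars d"
  unfolding dchars_def dirichlet_char_def by (auto simp: algebra_simps)

lemma cnj_in_dchars: "chi \<in> dchars d \<Longrightarrow> (\<lambda>n. cnj (chi n)) \<in> dchars d"
  unfolding dchars_def dirichlet_char_def by auto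

lemma sum_dchars_mult_reindex:
  assumes d: "d > 0" and psi: "psi \<in> dchars d"
  shows "(\<Sum>chi\<in>dchars d. f chi) = (\<Sum>chi\<in>dchars d. f (\<lambda>n. psi n * chi n))"
proof -
  have cancel: "(\<lambda>n. b n * (a n * chi n)) = chi"
    if "chi \<in> dchars d" "\<And>n. coprime n d \<Longrightarrow> b n * a n = 1" for a b chi
  proof
    fix n
    show "b n * (a n * chi n) = chi n"
      using that dirichlet_char_eq_0_iff[of d chi n] unfolding dchars_def
      by (cases "coprime n d") (auto simp: mult.assoc[symmetric])
  qed
  have psi': "dirichlet_char d psi" using psi by (simp add: dchars_def)
  have "psi n * cnj (psi n) = 1" "cnj (psi n) * psi n = 1" if "coprime n d" for n
    using dirichlet_char_mult_cnj[OF psi' that d] by (simp_all add: mult.commute)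
  then show ?thesis
    by (intro sum.reindex_bij_witness[of _ "\<lambda>chi n. psi n * chi n" "\<lambda>chi n. cnj (psi n) * chi n"])
       (auto simp: cancel psi mult_in_dchars cnj_in_dchars)
qed

lemma sum_dchars_apply:
  assumes d: "d > 0"
  shows "(\<Sum>chi\<in>dchars d. chi x) = (if [x = 1] (mod d) then of_nat (card (dchars d)) else 0)"
proof (cases "[x = 1] (mod d)")
  case True
  then have "chi x = 1" if "chi \<in> dchars d" for chi
    using that dirichlet_char_cong dirichlet_char_one unfolding dchars_def by (metis mem_Collect_eq)
  then have "(\<Sum>chi\<in>dchars d. chi x) = (\<Sum>chi\<in>dchars d. 1)" by (rule sum.cong[OF refl])
  then show ?thesis using True by simp
next
  case not_one: False
  show ?thesis
  proof (cases "coprime x d")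
    case False
    then show ?thesis
      using not_one dirichlet_char_eq_0_iff unfolding dchars_def by (auto intro!: sum.neutral)
  next
    case True
    then obtain psi where psi: "dirichlet_char d psi" "psi x \<noteq> 1"
      using dirichlet_char_separates not_one by metis
    have "(\<Sum>chi\<in>dchars d. chi x) = (\<Sum>chi\<in>dchars d. psi x * chi x)"
      using sum_dchars_mult_reindex[OF d, of psi "\<lambda>chi. chi x"] psi(1) by (simp add: dchars_def)
    also have "\<dots> = psi x * (\<Sum>chi\<in>dchars d. chi x)" by (rule sum_distrib_left[symmetric])
    finally have "(1 - psi x) * (\<Sum>chi\<in>dchars d. chi x) = 0" by (simp add: algebra_simps)
    then show ?thesis using psi(2) not_one by simp
  qed
qed

lemma card_coprime_lessThan:
  assumes "d > 0"
  shows "card {n. n < d \<and> coprime n d} = totient d"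
proof (cases "d = 1")
  case True
  then have "{n. n < d \<and> coprime n d} = {0}" by auto
  then show ?thesis using True by simp
next
  case False
  have "n > 0" if "coprime n d" for n
    using that False by (cases n) auto
  then have "{n. n < d \<and> coprime n d} = totatives d"
    using assms False totatives_less[of _ d] by (auto simp: in_totatives_iff)
  then show ?thesis by (simp add: totient_def)
qed

lemma sum_lessThan_dchar:
  assumes d: "d > 0" and chi: "chi \<in> dchars d"
  shows "(\<Sum>n<d. chi n) = (if chi = principal_dchar d then of_nat (totient d) else 0)"
proof (cases "chi = principal_dchar d")
  case True
  have "(\<Sum>n<d. principal_dchar d n) = of_nat (card {n. n < d \<and> coprime n d})"
    unfolding principal_dchar_def by (simp add: sum.If_cases Int_def)
  then show ?thesis using True card_coprime_lessThan[OF d] by simp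
next
  case False
  have chi': "dirichlet_char d chi" using chi by (simp add: dchars_def)
  obtain y where "chi y \<noteq> principal_dchar d y" using False by blast
  then have y: "coprime y d" "chi y \<noteq> 1"
    using dirichlet_char_eq_0_iff[OF chi', of y] unfolding principal_dchar_def by (auto split: if_splits)
  have inj: "inj_on (\<lambda>n. y * n mod d) {..<d}"
    using cong_mult_lcancel_nat[OF y(1)] by (auto simp: inj_on_def cong_def)
  have "(\<lambda>n. y * n mod d) ` {..<d} = {..<d}"
    by (rule endo_inj_surj) (use d inj in auto)
  with inj have bij: "bij_betw (\<lambda>n. y * n mod d) {..<d} {..<d}" by (rule bij_betw_imageI)
  have "(\<Sum>n<d. chi n) = (\<Sum>n<d. chi (y * n mod d))"
    by (rule sum.reindex_bij_betw[OF bij, symmetric])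
  also have "\<dots> = chi y * (\<Sum>n<d. chi n)"
    by (simp add: sum_distrib_left dirichlet_char_mod[OF chi'] dirichlet_char_mult[OF chi'])
  finally have "(1 - chi y) * (\<Sum>n<d. chi n) = 0" by (simp add: algebra_simps)
  then show ?thesis using y(2) False by simp
qed

lemma card_dchars:
  assumes d: "d > 0"
  shows "card (dchars d) = totient d"
proof -
  have "(\<Sum>n<d. \<Sum>chi\<in>dchars d. chi n) = (\<Sum>n<d. if n = 1 mod d then of_nat (card (dchars d)) else 0)"
    using d by (intro sum.cong refl) (auto simp: sum_dchars_apply cong_def)
  also have "\<dots> = of_nat (card (dchars d))" using d by simp
  finally have "of_nat (card (dchars d)) = (\<Sum>chi\<in>dchars d. \<Sum>n<d. chi n)"
    by (simp add: sum.swap[of _ "dchars d"])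
  also have "\<dots> = (\<Sum>chi\<in>dchars d. if chi = principal_dchar d then of_nat (totient d) else 0)"
    using sum_lessThan_dchar[OF d] by (intro sum.cong) simp_all
  also have "\<dots> = of_nat (totient d)"
    using finite_dchars[OF d] principal_dchar_in_dchars by simp
  finally show ?thesis by (simp only: of_nat_eq_iff)
qed

lemma cong_mult_inverse_iff:
  fixes y y' :: nat
  assumes y': "[y * y' = 1] (mod d)"
  shows "[b * y' = 1] (mod d) \<longleftrightarrow> [b = y] (mod d)"
proof
  assume "[b * y' = 1] (mod d)"
  then have "[b * y' * y = 1 * y] (mod d)" by (rule cong_mult[OF _ cong_refl])
  moreover have "[b * y' * y = b * 1] (mod d)"
    using cong_mult[OF cong_refl[of b] y'] by (simp add: mult_ac)
  ultimately show "[b = y] (mod d)" by (metis cong_sym cong_trans mult_1 mult_1_right)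
next
  assume "[b = y] (mod d)"
  then show "[b * y' = 1] (mod d)" using cong_trans[OF cong_mult[OF _ cong_refl] y'] by blast
qed

lemma sum_dchars_mult_cnj:
  assumes d: "d > 0"
  shows "(\<Sum>chi\<in>dchars d. chi b * cnj (chi y)) =
     (if coprime y d \<and> [b = y] (mod d) then of_nat (totient d) else 0)"
proof (cases "coprime y d")
  case False
  then show ?thesis using dirichlet_char_eq_0_iff unfolding dchars_def by (auto intro!: sum.neutral)
next
  case True
  obtain y' where y': "[y * y' = 1] (mod d)" using cong_solve_coprime_nat[OF True] by auto
  have "chi b * cnj (chi y) = chi (b * y')" if "chi \<in> dchars d" for chi
    using that dirichlet_char_cnj_eq[OF _ d y'] dirichlet_char_mult unfolding dchars_def by simp
  then have "(\<Sum>chi\<in>dchars d. chi b * cnj (chi y)) = (\<Sum>chi\<in>dchars d. chi (b * y'))" by simp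
  also have "\<dots> = (if [b = y] (mod d) then of_nat (totient d) else 0)"
    using sum_dchars_apply[OF d, of "b * y'"] card_dchars[OF d] cong_mult_inverse_iff[OF y'] by simp
  finally show ?thesis using True by simp
qed

definition unity_root :: "nat \<Rightarrow> nat \<Rightarrow> complex" where
  "unity_root d k = exp (2 * of_real pi * \<i> * of_nat k / of_nat d)"

lemma norm_unity_root: "norm (unity_root d k) = 1"
  by (simp add: unity_root_def norm_exp_eq_Re)

lemma unity_root_mod:
  assumes "d > 0"
  shows "unity_root d (k mod d) = unity_root d k"
proof -
  have "(of_nat k :: complex) = of_nat (k mod d) + of_nat d * of_nat (k div d)"
    by (metis of_nat_add of_nat_mult mod_mult_div_eq)
  then have "unity_root d k = unity_root d (k mod d) * exp (of_nat (k div d) * (2 * of_real pi * \<i>))"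
    unfolding unity_root_def using assms by (simp add: field_simps flip: exp_add)
  also have "exp (of_nat (k div d) * (2 * of_real pi * \<i>)) = 1"
    by (simp only: exp_of_nat_mult exp_two_pi_i power_one)
  finally show ?thesis by simp
qed

lemma unity_root_mult_cancel:
  "g > 0 \<Longrightarrow> unity_root (g * d) (g * k) = unity_root d k"
  by (simp add: unity_root_def field_simps)

lemma sum_dchars_gauss_sum:
  assumes d: "d > 0" and a: "coprime a d"
  shows "(\<Sum>chi\<in>dchars d. chi a * gauss_sum d (\<lambda>n. cnj (chi n)) * chi n) =
         (if coprime n d then of_nat (totient d) * unity_root d (a * n) else 0)"
proof -
  have "(\<Sum>chi\<in>dchars d. chi a * gauss_sum d (\<lambda>n. cnj (chi n)) * chi n) =
        (\<Sum>chi\<in>dchars d. \<Sum>\<nu><d. unity_root d \<nu> * (chi (a * n) * cnj (chi \<nu>)))"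
    unfolding gauss_sum_def unity_root_def dchars_def
    by (intro sum.cong refl)
       (auto simp: dirichlet_char_mult sum_distrib_left sum_distrib_right mult_ac)
  also have "\<dots> = (\<Sum>\<nu><d. unity_root d \<nu> * (\<Sum>chi\<in>dchars d. chi (a * n) * cnj (chi \<nu>)))"
    by (subst sum.swap) (simp add: sum_distrib_left)
  also have "\<dots> = (\<Sum>\<nu><d. if \<nu> = a * n mod d then
                    (if coprime \<nu> d then of_nat (totient d) * unity_root d \<nu> else 0) else 0)"
    using d by (intro sum.cong refl) (auto simp: sum_dchars_mult_cnj cong_def)
  also have "\<dots> = (if coprime n d then of_nat (totient d) * unity_root d (a * n) else 0)"
    using d a by (simp add: unity_root_mod)
  finally show ?thesis .
qed

lemma summable_norm_dirichlet_bounded: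
  assumes s: "Re s > 1" and f: "\<And>n. norm (f n) \<le> B"
  shows "summable (\<lambda>n. norm (f n / of_nat n powr s))"
proof (rule summable_comparison_test')
  show "summable (\<lambda>n. B * real n powr (- Re s))"
    using summable_real_powr_iff[of "- Re s"] s by (intro summable_mult) simp
  fix n :: nat
  have "norm (f n / of_nat n powr s) = norm (f n) / real n powr Re s"
    by (simp add: norm_divide norm_powr_real_powr)
  also have "\<dots> \<le> B * real n powr (- Re s)"
    using f[of n] by (simp add: powr_minus_divide divide_right_mono)
  finally show "norm (norm (f n / of_nat n powr s)) \<le> B * real n powr (- Re s)" by simp
qed

text \<open>The series in the definitions start at \<open>n = 1\<close>; the term at \<open>n = 0\<close> vanishes anyway
  because \<open>0 powr s = 0\<close> and division by zero gives zero.\<close>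
lemma suminf_dirichlet_Suc:
  assumes "summable (\<lambda>n. f n / of_nat n powr s :: complex)"
  shows "(\<Sum>n. f (Suc n) / of_nat (Suc n) powr s) = (\<Sum>n. f n / of_nat n powr s)"
  using suminf_split_head[OF assms] by simp

lemma dirichlet_L_eq_suminf:
  assumes s: "Re s > 1" and d: "d > 0" and chi: "chi \<in> dchars d"
  shows "dirichlet_L s chi = (\<Sum>n. chi n / of_nat n powr s)"
  unfolding dirichlet_L_def
  using chi norm_dirichlet_char_le[OF _ d]
  by (intro suminf_dirichlet_Suc summable_norm_cancel[OF summable_norm_dirichlet_bounded[OF s]])
     (auto simp: dchars_def)

lemma periodic_zeta_rational:
  assumes "Re s > 1" "m > 0"
  shows "periodic_zeta s (real a / real m) = (\<Sum>n. unity_root m (a * n) / of_nat n powr s)"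
proof -
  have exp_eq: "exp (2 * of_real pi * \<i> * of_real (real a / real m) * of_nat n) = unity_root m (a * n)"
    for n unfolding unity_root_def by (simp add: of_real_divide field_simps)
  have "summable (\<lambda>n. unity_root m (a * n) / of_nat n powr s)"
    by (rule summable_norm_cancel[OF summable_norm_dirichlet_bounded[OF assms(1), of _ 1]])
       (simp add: norm_unity_root)
  then show ?thesis
    unfolding periodic_zeta_def exp_eq by (rule suminf_dirichlet_Suc)
qed

lemma sum_dchars_dirichlet_L:
  assumes s: "Re s > 1" and d: "d > 0"
  shows "(\<Sum>chi\<in>dchars d. c chi * dirichlet_L s chi) =
    (\<Sum>n. (\<Sum>chi\<in>dchars d. c chi * chi n) / of_nat n powr s)"
proof -
  have summable: "summable (\<lambda>n. chi n / of_nat n powr s)" if "chi \<in> dchars d" for chi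
    using that norm_dirichlet_char_le[OF _ d]
    by (intro summable_norm_cancel[OF summable_norm_dirichlet_bounded[OF s]]) (auto simp: dchars_def)
  have "(\<Sum>chi\<in>dchars d. c chi * dirichlet_L s chi) =
      (\<Sum>chi\<in>dchars d. \<Sum>n. c chi * (chi n / of_nat n powr s))"
    by (intro sum.cong refl)
       (subst suminf_mult[OF summable], simp_all add: dirichlet_L_eq_suminf[OF s d])
  also have "\<dots> = (\<Sum>n. \<Sum>chi\<in>dchars d. c chi * (chi n / of_nat n powr s))"
    by (intro suminf_sum[symmetric] summable_mult summable)
  finally show ?thesis by (simp add: sum_divide_distrib)
qed

lemma dchars_gauss_sum_dirichlet_L:
  assumes s: "Re s > 1" and d: "d > 0" and a: "coprime a d"
  shows "(\<Sum>chi\<in>dchars d. chi a * gauss_sum d (\<lambda>n. cnj (chi n)) * dirichlet_L s chi) =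
    of_nat (totient d) * (\<Sum>n. (if coprime n d then unity_root d (a * n) else 0) / of_nat n powr s)"
proof -
  define f where "f n = (if coprime n d then unity_root d (a * n) else 0)" for n
  have "summable (\<lambda>n. f n / of_nat n powr s)"
    by (rule summable_norm_cancel[OF summable_norm_dirichlet_bounded[OF s, of _ 1]])
       (simp add: f_def norm_unity_root)
  moreover have "(\<Sum>chi\<in>dchars d. chi a * gauss_sum d (\<lambda>n. cnj (chi n)) * chi n) =
      of_nat (totient d) * f n" for n
    using sum_dchars_gauss_sum[OF d a, of n] by (simp add: f_def)
  ultimately show ?thesis
    using sum_dchars_dirichlet_L[OF s d, of "\<lambda>chi. chi a * gauss_sum d (\<lambda>n. cnj (chi n))"]
    by (simp add: suminf_mult[symmetric] f_def[symmetric] mult.assoc)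
qed

lemma image_mult_coprime_eq_gcd:
  fixes d m :: nat
  assumes "d dvd m" "m > 0"
  shows "(\<lambda>k. m div d * k) ` {k. coprime k d} = {n. gcd n m = m div d}"
proof -
  define g where "g = m div d"
  have m: "m = g * d" using assms(1) by (simp add: g_def)
  have "g > 0" using assms(2) unfolding m by simp
  have gcd_eq: "gcd (g * k) m = g \<longleftrightarrow> coprime k d" for k
  proof -
    have "gcd (g * k) m = g * gcd k d"
      unfolding m by (rule gcd_mult_distrib_nat[symmetric])
    then show ?thesis using \<open>g > 0\<close> unfolding coprime_iff_gcd_eq_1 by simp
  qed
  have "n \<in> (\<lambda>k. g * k) ` {k. coprime k d} \<longleftrightarrow> gcd n m = g" for n
  proof
    assume "n \<in> (\<lambda>k. g * k) ` {k. coprime k d}"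
    then obtain k where "coprime k d" "n = g * k" by blast
    then show "gcd n m = g" using gcd_eq[of k] by simp
  next
    assume "gcd n m = g"
    then have "g dvd n" by (metis gcd_dvd1)
    then obtain k where "n = g * k" by (rule dvdE)
    with \<open>gcd n m = g\<close> show "n \<in> (\<lambda>k. g * k) ` {k. coprime k d}"
      using gcd_eq[of k] by (intro image_eqI[of _ _ k]) simp_all
  qed
  then show ?thesis unfolding g_def[symmetric] by (simp add: set_eq_iff)
qed

lemma has_sum_gcd_class:
  fixes f :: "nat \<Rightarrow> 'a::banach"
  assumes f: "summable (\<lambda>n. norm (f n))" and d: "d dvd m" and m: "m > 0"
  shows "(f has_sum (\<Sum>k. if coprime k d then f (m div d * k) else 0)) {n. gcd n m = m div d}"
proof -
  define B where "B = {n. gcd n m = m div d}"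
  have inj: "inj_on (\<lambda>k. m div d * k) {k. coprime k d}"
    using d m by (intro inj_onI) (auto elim!: dvdE)
  have "f summable_on B"
    using norm_summable_imp_summable_on[OF f] by (rule summable_on_subset_banach) simp
  then have "(f has_sum infsum f B) B" by (rule has_sum_infsum)
  also have "?this \<longleftrightarrow> ((f \<circ> (\<lambda>k. m div d * k)) has_sum infsum f B) {k. coprime k d}"
    unfolding B_def image_mult_coprime_eq_gcd[OF d m, symmetric] by (rule has_sum_reindex[OF inj])
  also have "\<dots> \<longleftrightarrow> ((\<lambda>k. if coprime k d then f (m div d * k) else 0) has_sum infsum f B) UNIV"
    by (intro has_sum_cong_neutral) auto
  finally have "infsum f B = (\<Sum>k. if coprime k d then f (m div d * k) else 0)"
    by (metis has_sum_imp_sums sums_unique)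
  with \<open>(f has_sum infsum f B) B\<close> show ?thesis unfolding B_def by simp
qed

lemma suminf_split_by_gcd:
  fixes f :: "nat \<Rightarrow> 'a::banach"
  assumes f: "summable (\<lambda>n. norm (f n))" and m: "m > 0"
  shows "(\<Sum>n. f n) = (\<Sum>d | d dvd m. \<Sum>k. if coprime k d then f (m div d * k) else 0)"
proof -
  define B where "B d = {n. gcd n m = m div d}" for d
  have div_div: "m div (m div d) = d" if "d dvd m" for d
    using that m by (auto elim!: dvdE)
  have "B d \<inter> B d' = {}" if "d dvd m" "d' dvd m" "d \<noteq> d'" for d d'
  proof -
    have "m div d \<noteq> m div d'" using div_div[OF that(1)] div_div[OF that(2)] that(3) by metis
    then show ?thesis unfolding B_def by auto
  qed
  then have "(f has_sum (\<Sum>d | d dvd m. \<Sum>k. if coprime k d then f (m div d * k) else 0))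
      (\<Union>d\<in>{d. d dvd m}. B d)"
    using m has_sum_gcd_class[OF f _ m] unfolding B_def by (intro sum_has_sum) auto
  also have "(\<Union>d\<in>{d. d dvd m}. B d) = UNIV"
  proof -
    have "m div gcd n m dvd m" for n
      using dvd_mult_div_cancel[OF gcd_dvd2[of n m]] by (metis dvd_triv_right)
    moreover have "n \<in> B (m div gcd n m)" for n
      unfolding B_def using div_div[of "gcd n m"] by simp
    ultimately show ?thesis by (intro UNIV_eq_I[THEN sym] UN_I) simp_all
  qed
  finally show ?thesis
    by (rule has_sum_unique[OF norm_summable_imp_has_sum[OF f
          summable_sums[OF summable_norm_cancel[OF f]]]])
qed

lemma unity_root_dirichlet_term_rescale:
  assumes "m = g * d" "g > 0"
  shows "of_nat m powr s * unity_root m (a * (g * k)) / of_nat (g * k) powr s =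
         of_nat d powr s * unity_root d (a * k) / of_nat k powr s"
proof -
  have powr_mult: "of_nat (x * y) powr s = of_nat x powr s * (of_nat y powr s :: complex)" for x y :: nat
    by (simp add: powr_times_real)
  have "unity_root (g * d) (a * (g * k)) = unity_root d (a * k)"
    using unity_root_mult_cancel[OF assms(2), of d "a * k"] by (simp add: mult_ac)
  then have "of_nat m powr s * unity_root m (a * (g * k)) / of_nat (g * k) powr s =
      (of_nat g powr s * (of_nat d powr s * unity_root d (a * k))) / (of_nat g powr s * of_nat k powr s)"
    unfolding assms(1) powr_mult by (simp add: mult_ac)
  also have "\<dots> = of_nat d powr s * unity_root d (a * k) / of_nat k powr s"
    using assms(2) by (intro mult_divide_mult_cancel_left) simp
  finally show ?thesis .
qed

lemma periodic_zeta_divisor_sum: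
  assumes s: "Re s > 1" and m: "m > 0"
  shows "of_nat m powr s * periodic_zeta s (real a / real m) =
    (\<Sum>d | d dvd m. of_nat d powr s *
       (\<Sum>k. (if coprime k d then unity_root d (a * k) else 0) / of_nat k powr s))"
proof -
  define f where "f n = of_nat m powr s * unity_root m (a * n) / of_nat n powr s" for n
  have "summable (\<lambda>n. unity_root m (a * n) / of_nat n powr s)"
    by (rule summable_norm_cancel[OF summable_norm_dirichlet_bounded[OF s, of _ 1]])
       (simp add: norm_unity_root)
  then have "of_nat m powr s * periodic_zeta s (real a / real m) = (\<Sum>n. f n)"
    unfolding periodic_zeta_rational[OF s m] f_def times_divide_eq_right[symmetric]
    by (rule suminf_mult[symmetric])
  also have "\<dots> = (\<Sum>d | d dvd m. \<Sum>k. if coprime k d then f (m div d * k) else 0)"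
  proof (rule suminf_split_by_gcd[OF _ m])
    show "summable (\<lambda>n. norm (f n))"
      unfolding f_def
      by (rule summable_norm_dirichlet_bounded[OF s, of _ "norm (of_nat m powr s :: complex)"])
         (simp add: norm_mult norm_unity_root)
  qed
  also have "\<dots> = (\<Sum>d | d dvd m. of_nat d powr s *
       (\<Sum>k. (if coprime k d then unity_root d (a * k) else 0) / of_nat k powr s))"
  proof (rule sum.cong[OF refl])
    fix d assume "d \<in> {d. d dvd m}"
    then have m_eq: "m = m div d * d" and "m div d > 0" using m by (auto intro: Nat.gr0I)
    define F where "F k = (if coprime k d then unity_root d (a * k) else 0) / of_nat k powr s" for k
    have "summable F"
      unfolding F_def by (rule summable_norm_cancel[OF summable_norm_dirichlet_bounded[OF s, of _ 1]])
        (simp add: norm_unity_root)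
    have "(if coprime k d then f (m div d * k) else 0) = of_nat d powr s * F k" for k
      using unity_root_dirichlet_term_rescale[OF m_eq \<open>m div d > 0\<close>, of s a k]
      by (simp add: f_def F_def)
    then have "(\<Sum>k. if coprime k d then f (m div d * k) else 0) = (\<Sum>k. of_nat d powr s * F k)"
      by simp
    also have "\<dots> = of_nat d powr s * (\<Sum>k. F k)" by (rule suminf_mult[OF \<open>summable F\<close>])
    finally show "(\<Sum>k. if coprime k d then f (m div d * k) else 0) = of_nat d powr s * (\<Sum>k. F k)" .
  qed
  finally show ?thesis .
qed

theorem proposition1:
  fixes a m :: nat and s :: complex
  assumes "a > 0" and "m > 0" and "coprime a m" and "Re s > 1"
  shows "of_nat m powr s * periodic_zeta s (real a / real m) =
    (\<Sum>d\<in>{d. d dvd m}. of_nat d powr s / of_nat (totient d) *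
        (\<Sum>chi\<in>dchars d. chi a * gauss_sum d (\<lambda>n. cnj (chi n)) * dirichlet_L s chi))"
  unfolding periodic_zeta_divisor_sum[OF assms(4,2)]
proof (rule sum.cong[OF refl])
  fix d assume "d \<in> {d. d dvd m}"
  then have "d dvd m" by simp
  then have d: "d > 0" using assms(2) by (intro Nat.gr0I) simp
  have a: "coprime a d" using coprime_divisors[OF dvd_refl \<open>d dvd m\<close> assms(3)] .
  show "of_nat d powr s * (\<Sum>k. (if coprime k d then unity_root d (a * k) else 0) / of_nat k powr s) =
      of_nat d powr s / of_nat (totient d) *
        (\<Sum>chi\<in>dchars d. chi a * gauss_sum d (\<lambda>n. cnj (chi n)) * dirichlet_L s chi)"
    using d by (simp add: dchars_gauss_sum_dirichlet_L[OF assms(4) d a])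
qed

end
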